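(* For all $n\ge 0$, $|F_n(321,2143,3124)|=\binom{n}{2}+1$.
   Context: A permutation $\pi$ avoids a classical pattern $p\in S_k$ if no subsequence of $\pi$ of length $k$ is order-isomorphic to $p$. A Fishburn permutation is a permutation $\pi=\pi_1\cdots\pi_n$ of $[n]$ for which there are no indices $i<j$ with $\pi_j<\pi_i<\pi_{i+1}$ and $\pi_i=\pi_j+1$. $F_n(\sigma_1,\dots,\sigma_k)$ denotes the set of Fishburn permutations of length $n$ avoiding each of the classical patterns $\sigma_1,\dots,\sigma_k$ (with $F_0$ containing only the empty permutation). *)

theory Defs
  imports Main
begin

text \<open>Permutations of [n] are represented as lists: a list \<pi> is a permutation of
  [n] iff it is distinct and its set of entries is {1..n}. Positions are 0-indexed.\<close>

definition is_perm :: "nat \<Rightarrow> nat list \<Rightarrow> bool" where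
  "is_perm n \<pi> \<longleftrightarrow> distinct \<pi> \<and> set \<pi> = {1..n}"

definition contains :: "nat list \<Rightarrow> nat list \<Rightarrow> bool" where
  "contains \<pi> p \<longleftrightarrow> (\<exists>idx :: nat list.
      length idx = length p \<and> sorted_wrt (<) idx \<and> (\<forall>i\<in>set idx. i < length \<pi>) \<and>
      (\<forall>a < length p. \<forall>b < length p. (\<pi> ! (idx ! a) < \<pi> ! (idx ! b)) \<longleftrightarrow> (p ! a < p ! b)))"

definition avoids :: "nat list \<Rightarrow> nat list \<Rightarrow> bool" where
  "avoids \<pi> p \<longleftrightarrow> \<not> contains \<pi> p"

definition fishburn :: "nat list \<Rightarrow> bool" where
  "fishburn \<pi> \<longleftrightarrow> \<not> (\<exists>i j. i < j \<and> j < length \<pi> \<and> i + 1 < length \<pi> \<and>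
      \<pi> ! j < \<pi> ! i \<and> \<pi> ! i < \<pi> ! (i + 1) \<and> \<pi> ! i = \<pi> ! j + 1)"

definition F :: "nat \<Rightarrow> nat list list \<Rightarrow> nat list set" where
  "F n ps = {\<pi>. is_perm n \<pi> \<and> fishburn \<pi> \<and> (\<forall>p\<in>set ps. avoids \<pi> p)}"

end

theory Submission
  imports Defs
begin

text \<open>A permutation in the class either starts with 1, and is then \<open>1 \<oplus> \<sigma>\<close> for a \<open>\<sigma>\<close> in the
  class of length \<open>n - 1\<close>, or starts with some \<open>j \<ge> 2\<close>. In the latter case the Fishburn
  condition and 321-avoidance force the second entry to be 1, and avoiding 321, 2143 and 3124
  forces the remaining entries to be \<open>j + 1, \<dots>, n\<close> followed by \<open>2, \<dots>, j - 1\<close>. Hence the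
  class grows by \<open>n\<close> from length \<open>n\<close> to \<open>n + 1\<close>, which sums to \<open>(n choose 2) + 1\<close>.\<close>

lemma contains_map_strict_mono:
  assumes "strict_mono f"
  shows "contains (map f \<sigma>) p \<longleftrightarrow> contains \<sigma> p"
  using strict_mono_less[OF assms] unfolding contains_def by auto

text \<open>An occurrence of \<open>p\<close> using the new least entry \<open>x\<close> would have to send \<open>p ! 0\<close>
  to it, so \<open>p ! 0\<close> would be the least letter of \<open>p\<close>.\<close>

lemma contains_Cons_least:
  assumes least: "\<forall>y\<in>set \<sigma>. x < y" and not_least: "\<exists>b<length p. p ! b < p ! 0"
  shows "contains (x # \<sigma>) p \<longleftrightarrow> contains \<sigma> p"
proof
  assume "contains (x # \<sigma>) p"
  then obtain idx where idx: "length idx = length p" "sorted_wrt (<) idx"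
      "\<forall>i\<in>set idx. i < Suc (length \<sigma>)"
      "\<forall>a<length p. \<forall>b<length p. ((x # \<sigma>) ! (idx ! a) < (x # \<sigma>) ! (idx ! b)) \<longleftrightarrow> p ! a < p ! b"
    unfolding contains_def by auto
  obtain b where b: "b < length p" "p ! b < p ! 0" using not_least by blast
  have pos: "0 < i" if i: "i \<in> set idx" for i
  proof (rule ccontr)
    assume "\<not> 0 < i"
    obtain a where a: "a < length p" "idx ! a = i"
      using i idx(1) by (auto simp: in_set_conv_nth)
    have "a = 0"
      using a idx(1) sorted_wrt_nth_less[OF idx(2), of 0 a] \<open>\<not> 0 < i\<close> by (cases a) auto
    have "b \<noteq> 0" using b(2) by (cases b) auto
    then have "idx ! 0 < idx ! b"
      using b(1) idx(1) sorted_wrt_nth_less[OF idx(2), of 0 b] by auto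
    moreover have "idx ! b < Suc (length \<sigma>)" using b(1) idx(1,3) by simp
    ultimately have "(x # \<sigma>) ! (idx ! 0) < (x # \<sigma>) ! (idx ! b)"
      using a \<open>a = 0\<close> \<open>\<not> 0 < i\<close> least by (auto simp: nth_Cons')
    then show False using idx(4) b by (metis a(1) \<open>a = 0\<close> less_asym)
  qed
  have "idx = map Suc (map (\<lambda>i. i - 1) idx)"
    using pos by (simp add: map_idI)
  then obtain idx' where "idx = map Suc idx'" by blast
  with idx show "contains \<sigma> p" unfolding contains_def
    by (intro exI[of _ idx']) (auto simp: sorted_wrt_map)
next
  assume "contains \<sigma> p"
  then obtain idx where "length idx = length p" "sorted_wrt (<) idx" "\<forall>i\<in>set idx. i < length \<sigma>"
      "\<forall>a<length p. \<forall>b<length p. (\<sigma> ! (idx ! a) < \<sigma> ! (idx ! b)) \<longleftrightarrow> p ! a < p ! b"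
    unfolding contains_def by blast
  then show "contains (x # \<sigma>) p" unfolding contains_def
    by (intro exI[of _ "map Suc idx"]) (auto simp: sorted_wrt_map)
qed

lemma contains_Nil_iff: "contains [] p \<longleftrightarrow> p = []"
  unfolding contains_def by auto

lemma fishburn_map_Suc: "fishburn (map Suc \<sigma>) \<longleftrightarrow> fishburn \<sigma>"
  unfolding fishburn_def by (intro arg_cong[where f = Not] ex_cong1) auto

lemma fishburn_Cons_least:
  assumes least: "\<forall>y\<in>set \<sigma>. x < y"
  shows "fishburn (x # \<sigma>) \<longleftrightarrow> fishburn \<sigma>"
  unfolding fishburn_def
proof (intro arg_cong[where f = Not] iffI)
  assume "\<exists>i j. i < j \<and> j < length (x # \<sigma>) \<and> i + 1 < length (x # \<sigma>) \<and>
      (x # \<sigma>) ! j < (x # \<sigma>) ! i \<and> (x # \<sigma>) ! i < (x # \<sigma>) ! (i + 1) \<and>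
      (x # \<sigma>) ! i = (x # \<sigma>) ! j + 1"
  then obtain i j where ij: "i < j" "j < Suc (length \<sigma>)" "i + 1 < Suc (length \<sigma>)"
      "(x # \<sigma>) ! j < (x # \<sigma>) ! i" "(x # \<sigma>) ! i < (x # \<sigma>) ! (i + 1)"
      "(x # \<sigma>) ! i = (x # \<sigma>) ! j + 1"
    by auto
  obtain j' where j': "j = Suc j'" using ij(1) by (cases j) auto
  have "i \<noteq> 0"
  proof
    assume "i = 0"
    then have "\<sigma> ! j' < x" using ij(4) j' by simp
    moreover have "\<sigma> ! j' \<in> set \<sigma>" using ij(2) j' by simp
    ultimately show False using least by fastforce
  qed
  then obtain i' where "i = Suc i'" using not0_implies_Suc by blast
  with ij j' show "\<exists>i j. i < j \<and> j < length \<sigma> \<and> i + 1 < length \<sigma> \<and>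
      \<sigma> ! j < \<sigma> ! i \<and> \<sigma> ! i < \<sigma> ! (i + 1) \<and> \<sigma> ! i = \<sigma> ! j + 1"
    by (intro exI[of _ i'] exI[of _ j']) auto
next
  assume "\<exists>i j. i < j \<and> j < length \<sigma> \<and> i + 1 < length \<sigma> \<and>
      \<sigma> ! j < \<sigma> ! i \<and> \<sigma> ! i < \<sigma> ! (i + 1) \<and> \<sigma> ! i = \<sigma> ! j + 1"
  then obtain i j where "i < j" "j < length \<sigma>" "i + 1 < length \<sigma>"
      "\<sigma> ! j < \<sigma> ! i" "\<sigma> ! i < \<sigma> ! (i + 1)" "\<sigma> ! i = \<sigma> ! j + 1"
    by blast
  then show "\<exists>i j. i < j \<and> j < length (x # \<sigma>) \<and> i + 1 < length (x # \<sigma>) \<and>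
      (x # \<sigma>) ! j < (x # \<sigma>) ! i \<and> (x # \<sigma>) ! i < (x # \<sigma>) ! (i + 1) \<and>
      (x # \<sigma>) ! i = (x # \<sigma>) ! j + 1"
    by (intro exI[of _ "Suc i"] exI[of _ "Suc j"]) auto
qed

lemma is_perm_length: "is_perm n \<pi> \<Longrightarrow> length \<pi> = n"
  unfolding is_perm_def by (metis card_atLeastAtMost diff_Suc_1 distinct_card)

lemma is_perm_nth: "is_perm n \<pi> \<Longrightarrow> i < n \<Longrightarrow> \<pi> ! i \<in> {1..n}"
  by (metis is_perm_def is_perm_length nth_mem)

lemma is_perm_nth_eq_iff: "is_perm n \<pi> \<Longrightarrow> i < n \<Longrightarrow> k < n \<Longrightarrow> \<pi> ! i = \<pi> ! k \<longleftrightarrow> i = k"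
  by (metis is_perm_def is_perm_length nth_eq_iff_index_eq)

lemma is_perm_obtain_index:
  assumes "is_perm n \<pi>" "v \<in> {1..n}"
  obtains k where "k < n" "\<pi> ! k = v"
  using assms by (metis in_set_conv_nth is_perm_def is_perm_length)

lemma is_perm_Cons_Cons_set: "is_perm n (x # y # \<sigma>) \<Longrightarrow> set \<sigma> = {1..n} - {x, y}"
  unfolding is_perm_def by auto

lemma is_perm_Cons_map_Suc: "is_perm (Suc m) (1 # map Suc \<sigma>) \<longleftrightarrow> is_perm m \<sigma>"
proof -
  have range: "{1..Suc m} = insert 1 (Suc ` {1..m})"
    by (auto simp: atLeastAtMostSuc_conv)
  have "distinct (1 # map Suc \<sigma>) \<longleftrightarrow> distinct \<sigma> \<and> 0 \<notin> set \<sigma>"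
    by (auto simp: distinct_map)
  then have "is_perm (Suc m) (1 # map Suc \<sigma>) \<longleftrightarrow>
      distinct \<sigma> \<and> 0 \<notin> set \<sigma> \<and> insert 1 (Suc ` set \<sigma>) = insert 1 (Suc ` {1..m})"
    unfolding is_perm_def range by (simp del: image_Suc_atLeastAtMost)
  also have "\<dots> \<longleftrightarrow> distinct \<sigma> \<and> 0 \<notin> set \<sigma> \<and> set \<sigma> = {1..m}"
    by (auto simp: insert_ident inj_image_eq_iff[OF inj_Suc] image_iff
        simp del: image_Suc_atLeastAtMost)
  also have "\<dots> \<longleftrightarrow> is_perm m \<sigma>"
    by (auto simp: is_perm_def)
  finally show ?thesis .
qed

lemma finite_F: "finite (F n ps)"
proof (rule finite_subset)
  show "F n ps \<subseteq> {xs. set xs \<subseteq> {1..n} \<and> length xs = n}"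
    by (auto simp: F_def is_perm_def is_perm_length)
qed (rule finite_lists_length_eq[OF finite_atLeastAtMost])

lemma F_0: "[] \<notin> set ps \<Longrightarrow> F 0 ps = {[]}"
  by (auto simp: F_def is_perm_def fishburn_def avoids_def contains_Nil_iff)

lemma Cons_map_Suc_mem_F_iff:
  assumes "\<forall>p\<in>set ps. \<exists>b<length p. p ! b < p ! 0"
  shows "1 # map Suc \<sigma> \<in> F (Suc m) ps \<longleftrightarrow> \<sigma> \<in> F m ps"
proof (cases "is_perm m \<sigma>")
  case True
  then have "\<forall>y\<in>set (map Suc \<sigma>). 1 < y"
    by (auto simp: is_perm_def)
  with True assms show ?thesis
    unfolding F_def avoids_def mem_Collect_eq is_perm_Cons_map_Suc
    by (simp add: contains_Cons_least fishburn_Cons_least contains_map_strict_mono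
        strict_mono_Suc_iff fishburn_map_Suc)
next
  case False
  then show ?thesis unfolding F_def mem_Collect_eq is_perm_Cons_map_Suc by simp
qed

lemma ex_length_Suc_conv:
  "(\<exists>xs. length xs = Suc n \<and> P xs) \<longleftrightarrow> (\<exists>x xs. length xs = n \<and> P (x # xs))"
  by (metis length_Suc_conv)

lemma contains_321_iff: "contains \<pi> [3,2,1] \<longleftrightarrow>
  (\<exists>i k l. i < k \<and> k < l \<and> l < length \<pi> \<and> \<pi> ! l < \<pi> ! k \<and> \<pi> ! k < \<pi> ! i)"
  unfolding contains_def
  by (simp add: ex_length_Suc_conv All_less_Suc numeral_eq_Suc) (meson less_trans less_asym)

lemma contains_2143_iff: "contains \<pi> [2,1,4,3] \<longleftrightarrow>
  (\<exists>i k l m. i < k \<and> k < l \<and> l < m \<and> m < length \<pi> \<and>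
    \<pi> ! k < \<pi> ! i \<and> \<pi> ! i < \<pi> ! m \<and> \<pi> ! m < \<pi> ! l)"
proof
  assume "contains \<pi> [2,1,4,3]"
  then show "\<exists>i k l m. i < k \<and> k < l \<and> l < m \<and> m < length \<pi> \<and>
      \<pi> ! k < \<pi> ! i \<and> \<pi> ! i < \<pi> ! m \<and> \<pi> ! m < \<pi> ! l"
    unfolding contains_def by (simp add: ex_length_Suc_conv All_less_Suc numeral_eq_Suc) meson
next
  assume "\<exists>i k l m. i < k \<and> k < l \<and> l < m \<and> m < length \<pi> \<and>
      \<pi> ! k < \<pi> ! i \<and> \<pi> ! i < \<pi> ! m \<and> \<pi> ! m < \<pi> ! l"
  then obtain i k l m where "i < k" "k < l" "l < m" "m < length \<pi>"
      "\<pi> ! k < \<pi> ! i" "\<pi> ! i < \<pi> ! m" "\<pi> ! m < \<pi> ! l"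
    by blast
  then show "contains \<pi> [2,1,4,3]" unfolding contains_def
    by (intro exI[of _ "[i,k,l,m]"]) (auto simp: All_less_Suc numeral_eq_Suc)
qed

lemma contains_3124_iff: "contains \<pi> [3,1,2,4] \<longleftrightarrow>
  (\<exists>i k l m. i < k \<and> k < l \<and> l < m \<and> m < length \<pi> \<and>
    \<pi> ! k < \<pi> ! l \<and> \<pi> ! l < \<pi> ! i \<and> \<pi> ! i < \<pi> ! m)"
proof
  assume "contains \<pi> [3,1,2,4]"
  then show "\<exists>i k l m. i < k \<and> k < l \<and> l < m \<and> m < length \<pi> \<and>
      \<pi> ! k < \<pi> ! l \<and> \<pi> ! l < \<pi> ! i \<and> \<pi> ! i < \<pi> ! m"
    unfolding contains_def by (simp add: ex_length_Suc_conv All_less_Suc numeral_eq_Suc) meson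
next
  assume "\<exists>i k l m. i < k \<and> k < l \<and> l < m \<and> m < length \<pi> \<and>
      \<pi> ! k < \<pi> ! l \<and> \<pi> ! l < \<pi> ! i \<and> \<pi> ! i < \<pi> ! m"
  then obtain i k l m where "i < k" "k < l" "l < m" "m < length \<pi>"
      "\<pi> ! k < \<pi> ! l" "\<pi> ! l < \<pi> ! i" "\<pi> ! i < \<pi> ! m"
    by blast
  then show "contains \<pi> [3,1,2,4]" unfolding contains_def
    by (intro exI[of _ "[i,k,l,m]"]) (auto simp: All_less_Suc numeral_eq_Suc)
qed

abbreviation F_321_2143_3124 :: "nat \<Rightarrow> nat list set" where
  "F_321_2143_3124 n \<equiv> F n [[3,2,1], [2,1,4,3], [3,1,2,4]]"

lemma mem_F_321_2143_3124_iff: "\<pi> \<in> F_321_2143_3124 n \<longleftrightarrow>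
    is_perm n \<pi> \<and> fishburn \<pi> \<and>
    \<not> contains \<pi> [3,2,1] \<and> \<not> contains \<pi> [2,1,4,3] \<and> \<not> contains \<pi> [3,1,2,4]"
  unfolding F_def avoids_def by simp

definition tau :: "nat \<Rightarrow> nat \<Rightarrow> nat list" where
  "tau n j = j # 1 # [Suc j..<Suc n] @ [2..<j]"

lemma is_perm_tau: "2 \<le> j \<Longrightarrow> j \<le> n \<Longrightarrow> is_perm n (tau n j)"
  unfolding is_perm_def tau_def by auto

lemma length_tau: "2 \<le> j \<Longrightarrow> j \<le> n \<Longrightarrow> length (tau n j) = n"
  by (simp add: tau_def) arith

lemma tau_nth_0 [simp]: "tau n j ! 0 = j"
  by (simp add: tau_def)

lemma tau_nth_Suc_0 [simp]: "tau n j ! Suc 0 = 1"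
  by (simp add: tau_def)

lemma nth_tau:
  assumes "2 \<le> j" "j \<le> n" "i < n"
  shows "tau n j ! i =
    (if i = 0 then j else if i = 1 then 1 else if i < n + 2 - j then i + j - 1 else i + j - n)"
proof (cases i)
  case (Suc i')
  then show ?thesis using assms by (cases i') (auto simp: tau_def nth_append)
qed (simp add: tau_def)

context
  fixes n j :: nat
  assumes j: "2 \<le> j" "j \<le> n"
begin

lemma tau_nth_pos: "a < n \<Longrightarrow> 0 < tau n j ! a"
  using j by (simp add: nth_tau; arith)

lemma tau_nth_upper: "2 \<le> a \<Longrightarrow> a < n + 2 - j \<Longrightarrow> j < tau n j ! a"
  using j by (simp add: nth_tau)

lemma tau_nth_lower: "n + 2 - j \<le> a \<Longrightarrow> a < n \<Longrightarrow> 2 \<le> tau n j ! a \<and> tau n j ! a < j"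
  using j by (simp add: nth_tau; arith)

lemma tau_nth_mono:
  "2 \<le> a \<Longrightarrow> a < b \<Longrightarrow> b < n \<Longrightarrow> (a < n + 2 - j \<longleftrightarrow> b < n + 2 - j) \<Longrightarrow> tau n j ! a < tau n j ! b"
  using j by (auto simp: nth_tau)

lemma tau_descent:
  assumes "2 \<le> a" "a < b" "b < n" "tau n j ! b < tau n j ! a"
  shows "a < n + 2 - j \<and> n + 2 - j \<le> b"
  using tau_nth_mono[of a b] assms by (cases "a < n + 2 - j"; cases "b < n + 2 - j") auto

lemma tau_nth_less_head: "2 \<le> a \<Longrightarrow> a < n \<Longrightarrow> tau n j ! a < j \<Longrightarrow> n + 2 - j \<le> a"
  using tau_nth_upper[of a] by linarith

lemma tau_avoids_321: "\<not> contains (tau n j) [3,2,1]"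
proof
  assume "contains (tau n j) [3,2,1]"
  then obtain i k l where h: "i < k" "k < l" "l < n"
      "tau n j ! l < tau n j ! k" "tau n j ! k < tau n j ! i"
    unfolding contains_321_iff using length_tau[OF j] by auto
  show False
  proof (cases "i \<le> 1")
    case True
    moreover have "k \<noteq> 1" using h(4) tau_nth_pos[of l] j h(3) by auto
    ultimately have "i = 0" using h tau_nth_pos[of k] j by (cases i) auto
    with h(1) \<open>k \<noteq> 1\<close> have "2 \<le> k" by simp
    then have "n + 2 - j \<le> k" using tau_nth_less_head[of k] h \<open>i = 0\<close> by auto
    then show False using tau_nth_mono[of k l] h \<open>2 \<le> k\<close> by auto
  next
    case False
    then have "n + 2 - j \<le> k" using tau_descent[of i k] h by auto
    then show False using tau_nth_mono[of k l] h False by auto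
  qed
qed

lemma tau_avoids_2143: "\<not> contains (tau n j) [2,1,4,3]"
proof
  assume "contains (tau n j) [2,1,4,3]"
  then obtain i k l m where h: "i < k" "k < l" "l < m" "m < n"
      "tau n j ! k < tau n j ! i" "tau n j ! i < tau n j ! m" "tau n j ! m < tau n j ! l"
    unfolding contains_2143_iff using length_tau[OF j] by auto
  show False
  proof (cases "i \<le> 1")
    case True
    then have "i = 0" using h tau_nth_pos[of k] j by (cases i) auto
    then have "n + 2 - j \<le> m" using tau_descent[of l m] h by auto
    then show False using tau_nth_lower[of m] h \<open>i = 0\<close> by auto
  next
    case False
    then have "n + 2 - j \<le> k" using tau_descent[of i k] h by auto
    then show False using tau_nth_mono[of l m] h by auto
  qed
qed

lemma tau_avoids_3124: "\<not> contains (tau n j) [3,1,2,4]"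
proof
  assume "contains (tau n j) [3,1,2,4]"
  then obtain i k l m where h: "i < k" "k < l" "l < m" "m < n"
      "tau n j ! k < tau n j ! l" "tau n j ! l < tau n j ! i" "tau n j ! i < tau n j ! m"
    unfolding contains_3124_iff using length_tau[OF j] by auto
  show False
  proof (cases "i \<le> 1")
    case True
    then have "i = 0" using h tau_nth_pos[of l] j by (cases i) auto
    then have "n + 2 - j \<le> l" using tau_nth_less_head[of l] h by auto
    then show False using tau_nth_lower[of m] h \<open>i = 0\<close> by auto
  next
    case False
    then have "n + 2 - j \<le> l" "i < n + 2 - j" using tau_descent[of i l] h by auto
    then show False using tau_nth_lower[of m] tau_nth_upper[of i] h False by auto
  qed
qed

lemma fishburn_tau: "fishburn (tau n j)"
  unfolding fishburn_def
proof
  assume "\<exists>i k. i < k \<and> k < length (tau n j) \<and> i + 1 < length (tau n j) \<and>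
      tau n j ! k < tau n j ! i \<and> tau n j ! i < tau n j ! (i + 1) \<and> tau n j ! i = tau n j ! k + 1"
  then obtain i k where h: "i < k" "k < n" "tau n j ! k < tau n j ! i"
      "tau n j ! i < tau n j ! (i + 1)" "tau n j ! i = tau n j ! k + 1"
    using length_tau[OF j] by auto
  show False
  proof (cases "i \<le> 1")
    case True
    then show False using h tau_nth_pos[of k] j by (cases i) auto
  next
    case False
    then have "n + 2 - j \<le> k" "i < n + 2 - j" using tau_descent[of i k] h by auto
    then show False using tau_nth_lower[of k] tau_nth_upper[of i] h False by auto
  qed
qed

lemma tau_mem_F: "tau n j \<in> F_321_2143_3124 n"
  unfolding mem_F_321_2143_3124_iff
  using j is_perm_tau tau_avoids_321 tau_avoids_2143 tau_avoids_3124 fishburn_tau by simp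

end

lemma F_321_2143_3124_nth_1:
  assumes mem: "\<pi> \<in> F_321_2143_3124 n" and head: "\<pi> ! 0 = j" "2 \<le> j" and "0 < n"
  shows "j \<le> n" "\<pi> ! 1 = 1"
proof -
  have perm: "is_perm n \<pi>" and fish: "fishburn \<pi>" and av321: "\<not> contains \<pi> [3,2,1]"
    using mem unfolding mem_F_321_2143_3124_iff by auto
  have len: "length \<pi> = n" using is_perm_length[OF perm] .
  show "j \<le> n" using is_perm_nth[OF perm \<open>0 < n\<close>] head by simp
  then have "2 \<le> n" using head by simp
  have second: "\<pi> ! 1 \<in> {1..n}" "\<pi> ! 1 \<noteq> j"
    using is_perm_nth[OF perm, of 1] is_perm_nth_eq_iff[OF perm, of 1 0] \<open>2 \<le> n\<close> head by auto
  txt \<open>The value \<open>j - 1\<close> occurs later, so \<open>\<pi> ! 1 > j\<close> would violate the Fishburn condition at 0.\<close>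
  have "\<not> j < \<pi> ! 1"
  proof
    assume above: "j < \<pi> ! 1"
    have "j - 1 \<in> {1..n}" using head \<open>j \<le> n\<close> by auto
    then obtain k where k: "k < n" "\<pi> ! k = j - 1"
      using is_perm_obtain_index[OF perm] by blast
    have "k \<noteq> 0" "k \<noteq> 1" using k head above by (auto intro!: Nat.gr0I)
    then have "0 < k \<and> k < length \<pi> \<and> 0 + 1 < length \<pi> \<and>
        \<pi> ! k < \<pi> ! 0 \<and> \<pi> ! 0 < \<pi> ! (0 + 1) \<and> \<pi> ! 0 = \<pi> ! k + 1"
      using k above head len \<open>2 \<le> n\<close> by auto
    then show False using fish unfolding fishburn_def by blast
  qed
  then have below: "\<pi> ! 1 < j" using second(2) by auto
  show "\<pi> ! 1 = 1"
  proof (rule ccontr)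
    assume "\<pi> ! 1 \<noteq> 1"
    have "1 \<in> {1..n}" using \<open>2 \<le> n\<close> by auto
    then obtain k where k: "k < n" "\<pi> ! k = 1"
      using is_perm_obtain_index[OF perm] by blast
    have "k \<noteq> 0" using k(2) head by (intro notI) simp
    moreover have "k \<noteq> 1" using k(2) \<open>\<pi> ! 1 \<noteq> 1\<close> by (intro notI) simp
    ultimately have "1 < k" by simp
    then have "0 < (1::nat) \<and> 1 < k \<and> k < length \<pi> \<and> \<pi> ! k < \<pi> ! 1 \<and> \<pi> ! 1 < \<pi> ! 0"
      using k second below \<open>\<pi> ! 1 \<noteq> 1\<close> head len by auto
    then show False using av321 unfolding contains_321_iff by blast
  qed
qed

text \<open>A sort key under which the tail of \<open>tau n j\<close> (values above \<open>j\<close>, then values below \<open>j\<close>)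
  is increasing.\<close>

definition tail_key :: "nat \<Rightarrow> nat \<Rightarrow> nat \<Rightarrow> nat" where
  "tail_key n j v = (if v < j then v + n else v)"

lemma F_321_2143_3124_tail_sorted:
  assumes mem: "\<pi> \<in> F_321_2143_3124 n" and head: "\<pi> ! 0 = j" "2 \<le> j" and "0 < n"
  shows "sorted_wrt (<) (map (tail_key n j) (drop 2 \<pi>))"
proof -
  have perm: "is_perm n \<pi>" and av321: "\<not> contains \<pi> [3,2,1]"
    and av2143: "\<not> contains \<pi> [2,1,4,3]" and av3124: "\<not> contains \<pi> [3,1,2,4]"
    using mem unfolding mem_F_321_2143_3124_iff by auto
  have len: "length \<pi> = n" using is_perm_length[OF perm] .
  note second = F_321_2143_3124_nth_1[OF mem head \<open>0 < n\<close>]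
  have key: "tail_key n j (\<pi> ! p) < tail_key n j (\<pi> ! q)" if pq: "2 \<le> p" "p < q" "q < n" for p q
  proof -
    have range: "\<pi> ! p \<in> {1..n}" "\<pi> ! q \<in> {1..n}" using is_perm_nth[OF perm] pq by auto
    have "\<pi> ! p \<noteq> \<pi> ! 0" "\<pi> ! q \<noteq> \<pi> ! 0" "\<pi> ! p \<noteq> \<pi> ! q" "\<pi> ! p \<noteq> \<pi> ! 1"
      using pq by (simp_all add: is_perm_nth_eq_iff[OF perm])
    then have distinct_values: "\<pi> ! p \<noteq> j" "\<pi> ! q \<noteq> j" "\<pi> ! p \<noteq> \<pi> ! q" "\<pi> ! p \<noteq> 1"
      using head second by simp_all
    then consider "\<pi> ! p < j" "\<pi> ! q < j" | "j < \<pi> ! p" "j < \<pi> ! q"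
      | "\<pi> ! p < j" "j < \<pi> ! q" | "j < \<pi> ! p" "\<pi> ! q < j"
      by linarith
    then show ?thesis
    proof cases
      case 1
      have "\<not> \<pi> ! q < \<pi> ! p"
      proof
        assume "\<pi> ! q < \<pi> ! p"
        then have "0 < p \<and> p < q \<and> q < length \<pi> \<and> \<pi> ! q < \<pi> ! p \<and> \<pi> ! p < \<pi> ! 0"
          using 1 pq head len by auto
        then show False using av321 unfolding contains_321_iff by blast
      qed
      then show ?thesis using 1 distinct_values unfolding tail_key_def by auto
    next
      case 2
      have "\<not> \<pi> ! q < \<pi> ! p"
      proof
        assume "\<pi> ! q < \<pi> ! p"
        then have "0 < (1::nat) \<and> 1 < p \<and> p < q \<and> q < length \<pi> \<and>
            \<pi> ! 1 < \<pi> ! 0 \<and> \<pi> ! 0 < \<pi> ! q \<and> \<pi> ! q < \<pi> ! p"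
          using 2 pq head len second by auto
        then show False using av2143 unfolding contains_2143_iff by blast
      qed
      then show ?thesis using 2 distinct_values unfolding tail_key_def by auto
    next
      case 3
      have "0 < (1::nat) \<and> 1 < p \<and> p < q \<and> q < length \<pi> \<and>
          \<pi> ! 1 < \<pi> ! p \<and> \<pi> ! p < \<pi> ! 0 \<and> \<pi> ! 0 < \<pi> ! q"
        using 3 pq head len range second distinct_values by auto
      then show ?thesis using av3124 unfolding contains_3124_iff by blast
    next
      case 4
      then show ?thesis using range unfolding tail_key_def by auto
    qed
  qed
  show ?thesis unfolding sorted_wrt_iff_nth_less using key len by auto
qed

lemma F_321_2143_3124_eq_tau:
  assumes mem: "\<pi> \<in> F_321_2143_3124 n" and head: "\<pi> ! 0 = j" "2 \<le> j" and "0 < n"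
  shows "\<pi> = tau n j"
proof -
  note second = F_321_2143_3124_nth_1[OF mem head \<open>0 < n\<close>]
  have perm: "is_perm n \<pi>" using mem unfolding mem_F_321_2143_3124_iff by blast
  have decomp: "\<pi> = j # 1 # drop 2 \<pi>"
    using is_perm_length[OF perm] head second by (cases \<pi>; cases "tl \<pi>") auto
  have tau_decomp: "tau n j = j # 1 # drop 2 (tau n j)"
    by (simp add: tau_def)
  have tail_set: "set (drop 2 \<pi>) = {1..n} - {j, 1}"
    using is_perm_Cons_Cons_set[of n j 1] perm decomp by simp
  have same_set: "set (drop 2 \<pi>) = set (drop 2 (tau n j))"
    using is_perm_Cons_Cons_set[of n j 1] is_perm_tau[OF head(2) second(1)] tau_decomp tail_set
    by simp
  have "inj_on (tail_key n j) {1..n}"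
    by (auto simp: inj_on_def tail_key_def)
  then have inj: "inj_on (tail_key n j) (set (drop 2 \<pi>) \<union> set (drop 2 (tau n j)))"
    by (rule inj_on_subset) (simp add: same_set [symmetric] tail_set)
  have same_tail: "drop 2 \<pi> = drop 2 (tau n j)"
    using F_321_2143_3124_tail_sorted[OF mem head \<open>0 < n\<close>]
      F_321_2143_3124_tail_sorted[OF tau_mem_F[OF head(2) second(1)] tau_nth_0 head(2) \<open>0 < n\<close>]
    by (intro map_sorted_distinct_set_unique[OF inj _ _ _ _ same_set]) (simp_all add: strict_sorted_iff)
  from decomp have "\<pi> = j # 1 # drop 2 (tau n j)"
    by (simp only: same_tail)
  also note tau_decomp [symmetric]
  finally show ?thesis .
qed

lemma patterns_start_above_min: "\<forall>p\<in>set [[3,2,1], [2,1,4,3], [3,1,2,4::nat]]. \<exists>b<length p. p ! b < p ! 0"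
  by (auto intro!: exI[of _ 1])

lemma F_321_2143_3124_Suc:
  "F_321_2143_3124 (Suc m) = (\<lambda>\<sigma>. 1 # map Suc \<sigma>) ` F_321_2143_3124 m \<union> tau (Suc m) ` {2..Suc m}"
  (is "?F = ?direct_sums \<union> ?taus")
proof (intro set_eqI iffI)
  fix \<pi> assume mem: "\<pi> \<in> ?F"
  then have perm: "is_perm (Suc m) \<pi>" unfolding mem_F_321_2143_3124_iff by auto
  show "\<pi> \<in> ?direct_sums \<union> ?taus"
  proof (cases "\<pi> ! 0 = 1")
    case True
    define \<sigma> where "\<sigma> = map (\<lambda>x. x - 1) (tl \<pi>)"
    have "\<forall>x\<in>set (tl \<pi>). 1 \<le> x" using perm unfolding is_perm_def by (cases \<pi>) auto
    then have "map Suc \<sigma> = tl \<pi>" unfolding \<sigma>_def by (auto intro!: map_idI)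
    then have \<pi>_eq: "\<pi> = 1 # map Suc \<sigma>"
      using True is_perm_length[OF perm] by (cases \<pi>) auto
    then have "\<sigma> \<in> F_321_2143_3124 m"
      using mem Cons_map_Suc_mem_F_iff[OF patterns_start_above_min] by simp
    with \<pi>_eq show ?thesis by blast
  next
    case False
    then have head: "2 \<le> \<pi> ! 0" using is_perm_nth[OF perm, of 0] by auto
    have "\<pi> ! 0 \<in> {2..Suc m}"
      using head F_321_2143_3124_nth_1(1)[OF mem refl head] by simp
    moreover have "\<pi> = tau (Suc m) (\<pi> ! 0)"
      by (rule F_321_2143_3124_eq_tau[OF mem refl head]) simp
    ultimately show ?thesis by blast
  qed
next
  fix \<pi> assume "\<pi> \<in> ?direct_sums \<union> ?taus"
  then show "\<pi> \<in> ?F"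
  proof
    assume "\<pi> \<in> ?direct_sums"
    then show "\<pi> \<in> ?F" using Cons_map_Suc_mem_F_iff[OF patterns_start_above_min] by blast
  next
    assume "\<pi> \<in> ?taus"
    then show "\<pi> \<in> ?F" using tau_mem_F by auto
  qed
qed

lemma card_F_321_2143_3124_Suc: "card (F_321_2143_3124 (Suc m)) = card (F_321_2143_3124 m) + m"
proof -
  have "inj_on (\<lambda>\<sigma>. 1 # map Suc \<sigma>) (F_321_2143_3124 m)"
    by (rule inj_onI) (simp add: inj_map_eq_map)
  moreover have "inj_on (tau (Suc m)) {2..Suc m}"
    by (rule inj_onI) (simp add: tau_def)
  moreover have "(\<lambda>\<sigma>. 1 # map Suc \<sigma>) ` F_321_2143_3124 m \<inter> tau (Suc m) ` {2..Suc m} = {}"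
    by (auto simp: tau_def)
  ultimately show ?thesis
    unfolding F_321_2143_3124_Suc by (simp add: card_Un_disjoint card_image finite_F)
qed

theorem mainTheorem11:
  fixes n :: nat
  shows "card (F n [[3,2,1], [2,1,4,3], [3,1,2,4]]) = (n choose 2) + 1"
proof (induction n)
  case 0
  then show ?case by (simp add: F_0)
next
  case (Suc m)
  have "Suc m choose 2 = m + (m choose 2)"
    by (simp add: numeral_2_eq_2)
  with Suc.IH card_F_321_2143_3124_Suc[of m] show ?case by simp
qed

end
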